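(* Let $\tau$ be a row-standard tableau with $\tau\in D_i$, and let $j$ be the entry in the box immediately above $i$. Then $n_{\mathrm{inv}}(\delta_i(\tau))=n_{\mathrm{inv}}(\tau)-1$ if $(\min(i,j),\max(i,j))$ is an inversion of $\tau$, and $n_{\mathrm{inv}}(\delta_i(\tau))=n_{\mathrm{inv}}(\tau)+1$ otherwise.
   Context: Fix a Young diagram $Y$ with $n$ boxes (rows drawn top to bottom, left-justified). A row-standard tableau of shape $Y$ is a bijective numbering of its boxes by $1,\dots,n$ increasing left to right along rows; it is standard if also increasing top to bottom along columns. An inversion of a row-standard $\tau$ is a pair $i<j$ in the same column such that either (i) $i$ or $j$ has no box immediately to its right and $i$ is below $j$, or (ii) $i,j$ have right neighbours $i',j'$ with $i'>j'$; $n_{\mathrm{inv}}(\tau)$ is their number. For $i\in\{1,\dots,n\}$, $D_i$ is the set of row-standard tableaux $\tau$ such that: (1) $i$ is not in the first row, and letting $j$ be the entry immediately above $i$: (2) if $i$ has a right neighbour $i'$ then $j<i'$, and if $j$ has a right neighbour $j'$ then $i<j'$; (3) for every $k$ in the same column as $i,j$ with $\min(i,j)<k<\max(i,j)$, exactly one of $(\min(i,j),k)$ and $(k,\max(i,j))$ is an inversion. For $\tau\in D_i$, if $i_1<\dots<i_q=i$ are the entries of the row of $i$ up to $i$ and $j_1<\dots<j_q=j$ those of the row of $j$ up to $j$, then $\delta_i(\tau)$ is the row-standard tableau obtained by swapping $i_k$ and $j_k$ for every $k=1,\dots,q$. *)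

theory Defs
  imports Main
begin

text \<open>A Young diagram is given by its list of row lengths (top row first),
  weakly decreasing and positive. Boxes are pairs (row, column), 0-indexed,
  rows counted from the top.\<close>

definition young_diagram :: "nat list \<Rightarrow> bool" where
  "young_diagram Y \<longleftrightarrow> 0 \<notin> set Y \<and> (\<forall>k. Suc k < length Y \<longrightarrow> Y ! Suc k \<le> Y ! k)"

definition boxes :: "nat list \<Rightarrow> (nat \<times> nat) set" where
  "boxes Y = {(r, c). r < length Y \<and> c < Y ! r}"

text \<open>A tableau is a function on boxes; values outside the boxes are irrelevant.\<close>

definition row_standard :: "nat list \<Rightarrow> (nat \<times> nat \<Rightarrow> nat) \<Rightarrow> bool" where
  "row_standard Y \<tau> \<longleftrightarrow>
     bij_betw \<tau> (boxes Y) {1..sum_list Y} \<and>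
     (\<forall>r c. (r, Suc c) \<in> boxes Y \<longrightarrow> \<tau> (r, c) < \<tau> (r, Suc c))"

definition is_inversion :: "nat list \<Rightarrow> (nat \<times> nat \<Rightarrow> nat) \<Rightarrow> nat \<Rightarrow> nat \<Rightarrow> bool" where
  "is_inversion Y \<tau> a b \<longleftrightarrow> a < b \<and>
     (\<exists>r1 r2 c. (r1, c) \<in> boxes Y \<and> (r2, c) \<in> boxes Y \<and> \<tau> (r1, c) = a \<and> \<tau> (r2, c) = b \<and>
       (((r1, Suc c) \<notin> boxes Y \<or> (r2, Suc c) \<notin> boxes Y) \<and> r2 < r1
        \<or> (r1, Suc c) \<in> boxes Y \<and> (r2, Suc c) \<in> boxes Y \<and> \<tau> (r2, Suc c) < \<tau> (r1, Suc c)))"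

definition n_inv :: "nat list \<Rightarrow> (nat \<times> nat \<Rightarrow> nat) \<Rightarrow> nat" where
  "n_inv Y \<tau> = card {(a, b). is_inversion Y \<tau> a b}"

definition box_of :: "nat list \<Rightarrow> (nat \<times> nat \<Rightarrow> nat) \<Rightarrow> nat \<Rightarrow> nat \<times> nat" where
  "box_of Y \<tau> i = (THE b. b \<in> boxes Y \<and> \<tau> b = i)"

definition in_D :: "nat list \<Rightarrow> nat \<Rightarrow> (nat \<times> nat \<Rightarrow> nat) \<Rightarrow> bool" where
  "in_D Y i \<tau> \<longleftrightarrow> row_standard Y \<tau> \<and> i \<in> {1..sum_list Y} \<and>
     (\<exists>r c. (r, c) \<in> boxes Y \<and> \<tau> (r, c) = i \<and> 0 < r \<and>
        (let j = \<tau> (r - 1, c) in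
          ((r, Suc c) \<in> boxes Y \<longrightarrow> j < \<tau> (r, Suc c)) \<and>
          ((r - 1, Suc c) \<in> boxes Y \<longrightarrow> i < \<tau> (r - 1, Suc c)) \<and>
          (\<forall>r'. (r', c) \<in> boxes Y \<longrightarrow>
             (let k = \<tau> (r', c) in min i j < k \<and> k < max i j \<longrightarrow>
               (is_inversion Y \<tau> (min i j) k \<noteq> is_inversion Y \<tau> k (max i j))))))"

definition delta :: "nat list \<Rightarrow> nat \<Rightarrow> (nat \<times> nat \<Rightarrow> nat) \<Rightarrow> (nat \<times> nat \<Rightarrow> nat)" where
  "delta Y i \<tau> = (case box_of Y \<tau> i of (r, c) \<Rightarrow>
     (\<lambda>(a, b). if a = r \<and> b \<le> c then \<tau> (r - 1, b)
               else if a = r - 1 \<and> b \<le> c then \<tau> (r, b)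
               else \<tau> (a, b)))"

end

theory Submission
  imports Defs
begin

(* Since tau is injective on the boxes, inversions can be counted as pairs of boxes (x, y) of one
   column with t x < t y that stand in the "inversion order" (x lower when one of them has no
   right neighbour, otherwise x's right neighbour larger); n_inv becomes a double sum of
   indicators over the boxes.  For two boxes in different rows exactly one of the two orders
   holds, so such a pair contributes one inversion iff the comparison of values agrees with the
   inversion order (box_pair_count).
   delta_i is tau composed with the involution sigma exchanging the initial segments (up to
   column c) of rows r-1 and r, where (r, c) is the box of i.  With up = (r-1, c), low = (r, c),
   the double sum splits into
     (a) pairs avoiding up and low: unchanged, by reindexing with sigma;
     (b) pairs of up or low with a third box x: for x in column c the contributions balance,
         using condition (3) of D_i when tau x lies strictly between i and j;
     (c) the pair {up, low}: exchanging the values i and j flips whether it is an inversion. *)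

section \<open>Inversions as a relation between boxes\<close>

definition right :: "nat \<times> nat \<Rightarrow> nat \<times> nat" where
  "right p = (fst p, Suc (snd p))"

definition inversion_order :: "nat list \<Rightarrow> (nat \<times> nat \<Rightarrow> nat) \<Rightarrow> nat \<times> nat \<Rightarrow> nat \<times> nat \<Rightarrow> bool" where
  "inversion_order Y t x y \<longleftrightarrow>
     (right x \<notin> boxes Y \<or> right y \<notin> boxes Y) \<and> fst y < fst x
     \<or> right x \<in> boxes Y \<and> right y \<in> boxes Y \<and> t (right y) < t (right x)"

definition box_inversion :: "nat list \<Rightarrow> (nat \<times> nat \<Rightarrow> nat) \<Rightarrow> nat \<times> nat \<Rightarrow> nat \<times> nat \<Rightarrow> bool" where
  "box_inversion Y t x y \<longleftrightarrow>
     x \<in> boxes Y \<and> y \<in> boxes Y \<and> snd x = snd y \<and> t x < t y \<and> inversion_order Y t x y"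

lemma box_inversion_same_column: "box_inversion Y t x y \<Longrightarrow> snd x = snd y"
  by (simp add: box_inversion_def)

lemma box_inversion_irrefl: "\<not> box_inversion Y t x x"
  by (simp add: box_inversion_def)

lemma is_inversion_iff_box_inversion:
  "is_inversion Y t a b \<longleftrightarrow> (\<exists>x y. box_inversion Y t x y \<and> t x = a \<and> t y = b)"
  unfolding is_inversion_def box_inversion_def inversion_order_def right_def
  by (rule iffI; clarsimp) (metis fst_conv snd_conv, metis prod.collapse)

lemma is_inversion_at_boxes:
  assumes "inj_on t (boxes Y)" "x \<in> boxes Y" "y \<in> boxes Y"
  shows "is_inversion Y t (t x) (t y) \<longleftrightarrow> box_inversion Y t x y"
proof
  assume "is_inversion Y t (t x) (t y)"
  then obtain x' y' where inv: "box_inversion Y t x' y'" "t x' = t x" "t y' = t y"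
    unfolding is_inversion_iff_box_inversion by blast
  then have "x' = x" "y' = y"
    using assms by (auto simp: box_inversion_def inj_on_def)
  with inv show "box_inversion Y t x y" by simp
qed (unfold is_inversion_iff_box_inversion, blast)

lemma finite_boxes: "finite (boxes Y)"
proof -
  have "boxes Y = Sigma {..<length Y} (\<lambda>r. {..<Y ! r})"
    by (auto simp: boxes_def)
  then show ?thesis by simp
qed

lemma n_inv_double_sum:
  assumes inj: "inj_on t (boxes Y)"
  shows "n_inv Y t = (\<Sum>x\<in>boxes Y. \<Sum>y\<in>boxes Y. of_bool (box_inversion Y t x y))"
proof -
  let ?P = "{p \<in> boxes Y \<times> boxes Y. box_inversion Y t (fst p) (snd p)}"
  have "{(a, b). is_inversion Y t a b} = (\<lambda>(x, y). (t x, t y)) ` ?P"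
    unfolding is_inversion_iff_box_inversion by (force simp: box_inversion_def)
  moreover have "inj_on (\<lambda>(x, y). (t x, t y)) ?P"
    using inj by (auto simp: inj_on_def)
  ultimately have "n_inv Y t = card ?P"
    unfolding n_inv_def by (simp add: card_image)
  also have "\<dots> = (\<Sum>p\<in>boxes Y \<times> boxes Y. of_bool (box_inversion Y t (fst p) (snd p)))"
    using finite_boxes by (simp add: Int_def)
  also have "\<dots> = (\<Sum>x\<in>boxes Y. \<Sum>y\<in>boxes Y. of_bool (box_inversion Y t x y))"
    by (simp add: sum.cartesian_product case_prod_beta)
  finally show ?thesis .
qed

text \<open>Of two boxes in different rows, exactly one stands in inversion order to the other:
  either one of them lacks a right neighbour and the rows decide, or the (distinct) values
  of the right neighbours decide.\<close>

lemma inversion_order_antisym: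
  assumes "inj_on t (boxes Y)" "fst x \<noteq> fst y"
  shows "inversion_order Y t y x \<longleftrightarrow> \<not> inversion_order Y t x y"
proof -
  have "right x \<noteq> right y" using assms(2) by (simp add: right_def)
  then have "right x \<in> boxes Y \<Longrightarrow> right y \<in> boxes Y \<Longrightarrow> t (right x) \<noteq> t (right y)"
    using assms(1) by (auto simp: inj_on_def)
  then show ?thesis
    using assms(2) by (auto simp: inversion_order_def)
qed

lemma box_pair_count:
  assumes inj: "inj_on t (boxes Y)" and boxes: "x \<in> boxes Y" "y \<in> boxes Y"
    and col: "snd x = snd y" and rows: "fst x \<noteq> fst y"
  shows "of_bool (box_inversion Y t x y) + of_bool (box_inversion Y t y x)
       = (of_bool (t x < t y \<longleftrightarrow> inversion_order Y t x y) :: nat)"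
proof -
  have "x \<noteq> y" using rows by auto
  then have "t x \<noteq> t y" using inj boxes by (auto simp: inj_on_def)
  then show ?thesis
    using boxes col inversion_order_antisym[OF inj rows] by (auto simp: box_inversion_def)
qed

lemma double_sum_split_two:
  fixes f :: "'a \<Rightarrow> 'a \<Rightarrow> 'b :: comm_monoid_add"
  assumes "finite S" "a \<in> S" "b \<in> S" "a \<noteq> b"
  shows "(\<Sum>x\<in>S. \<Sum>y\<in>S. f x y) =
           (\<Sum>x\<in>S - {a, b}. \<Sum>y\<in>S - {a, b}. f x y)
         + (\<Sum>x\<in>S - {a, b}. (f x a + f a x) + (f x b + f b x))
         + ((f a a + f b b) + (f a b + f b a))"
proof -
  have split: "sum g S = g a + g b + sum g (S - {a, b})" for g :: "'a \<Rightarrow> 'b"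
  proof -
    have "S = insert a (insert b (S - {a, b}))" using assms by auto
    then have "sum g S = sum g (insert a (insert b (S - {a, b})))" by simp
    also have "\<dots> = g a + g b + sum g (S - {a, b})" using assms by (simp add: add.assoc)
    finally show ?thesis .
  qed
  show ?thesis
    by (simp only: split sum.distrib) (simp add: ac_simps)
qed

section \<open>The segment swap\<close>

definition segment_swap :: "nat \<Rightarrow> nat \<Rightarrow> nat \<times> nat \<Rightarrow> nat \<times> nat" where
  "segment_swap r c p =
     (if fst p = r \<and> snd p \<le> c then (r - 1, snd p)
      else if fst p = r - 1 \<and> snd p \<le> c then (r, snd p) else p)"

lemma delta_eq_segment_swap:
  assumes "inj_on \<tau> (boxes Y)" "(r, c) \<in> boxes Y" "\<tau> (r, c) = i"
  shows "delta Y i \<tau> = \<tau> \<circ> segment_swap r c"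
proof -
  have "box_of Y \<tau> i = (r, c)"
    unfolding box_of_def using assms by (auto simp: inj_on_def)
  then show ?thesis
    by (auto simp: delta_def segment_swap_def fun_eq_iff)
qed

locale segment_swap_setting =
  fixes Y :: "nat list" and \<tau> :: "nat \<times> nat \<Rightarrow> nat" and r c :: nat
  assumes young: "young_diagram Y"
    and inj: "inj_on \<tau> (boxes Y)"
    and row_pos: "0 < r"
    and low_box: "(r, c) \<in> boxes Y"
begin

abbreviation "\<sigma> \<equiv> segment_swap r c"
abbreviation "up \<equiv> (r - 1, c)"
abbreviation "low \<equiv> (r, c)"
abbreviation "others \<equiv> boxes Y - {up, low}"

lemma in_boxes: "(a, b) \<in> boxes Y \<longleftrightarrow> a < length Y \<and> b < Y ! a"
  by (simp add: boxes_def)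

lemma rows_shrink: "Y ! r \<le> Y ! (r - 1)"
  using young row_pos low_box unfolding young_diagram_def in_boxes
  by (metis Suc_pred')

lemma up_box: "up \<in> boxes Y"
  using low_box rows_shrink by (auto simp: in_boxes)

lemma up_ne_low: "up \<noteq> low"
  using row_pos by simp

lemma swap_involution: "\<sigma> (\<sigma> p) = p"
  using row_pos by (cases p) (auto simp: segment_swap_def)

lemma swap_boxes: "\<sigma> p \<in> boxes Y \<longleftrightarrow> p \<in> boxes Y"
proof -
  have "p \<in> boxes Y \<Longrightarrow> \<sigma> p \<in> boxes Y" for p
    using low_box rows_shrink row_pos by (cases p) (auto simp: segment_swap_def in_boxes)
  then show ?thesis using swap_involution by metis
qed

lemma inj_swapped: "inj_on (\<tau> \<circ> \<sigma>) (boxes Y)"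
  using inj swap_boxes swap_involution unfolding inj_on_def o_def by metis

lemma swap_column: "snd (\<sigma> p) = snd p"
  by (simp add: segment_swap_def)

lemma swap_up_low: "\<sigma> up = low" "\<sigma> low = up"
  using row_pos by (auto simp: segment_swap_def)

lemma swapped_values: "(\<tau> \<circ> \<sigma>) up = \<tau> low" "(\<tau> \<circ> \<sigma>) low = \<tau> up"
  unfolding o_def swap_up_low by (rule refl)+

lemma swap_right: "p \<noteq> up \<Longrightarrow> p \<noteq> low \<Longrightarrow> \<sigma> (right p) = right (\<sigma> p)"
  by (cases p) (auto simp: segment_swap_def right_def)

text \<open>The right neighbours of column \<open>c\<close> lie beyond the swapped segments, so the inversion
  order within column \<open>c\<close> is the same for the swapped tableau.\<close>

lemma column_order_fixed:
  assumes "snd x = c" "snd y = c"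
  shows "inversion_order Y (\<tau> \<circ> \<sigma>) x y \<longleftrightarrow> inversion_order Y \<tau> x y"
  using assms by (simp add: inversion_order_def segment_swap_def right_def)

lemma swap_others: "bij_betw \<sigma> others others"
proof -
  have maps: "\<sigma> ` others \<subseteq> others"
  proof
    fix q assume "q \<in> \<sigma> ` others"
    then obtain p where p: "p \<in> others" and q: "q = \<sigma> p" by blast
    then have "q \<in> boxes Y" using swap_boxes by simp
    moreover have "q \<noteq> up" "q \<noteq> low"
      using p q swap_involution[of p] swap_up_low by auto
    ultimately show "q \<in> others" by simp
  qed
  show ?thesis
    by (rule bij_betw_byWitness[OF _ _ maps maps]) (simp_all add: swap_involution)
qed

text \<open>If two boxes of one column do not both have right neighbours, they lie in a column
  at or right of \<open>c\<close>, or one of them is outside rows \<open>r - 1, r\<close>; either way the swap does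
  not change their vertical order.\<close>

lemma swap_row_order:
  assumes x: "x \<in> others" and y: "y \<in> others" and col: "snd x = snd y"
    and no_right: "right x \<notin> boxes Y \<or> right y \<notin> boxes Y"
  shows "fst (\<sigma> y) < fst (\<sigma> x) \<longleftrightarrow> fst y < fst x"
proof (cases "snd x < c")
  case False
  with x y col have "\<sigma> x = x" "\<sigma> y = y"
    by (auto simp: segment_swap_def prod_eq_iff)
  then show ?thesis by simp
next
  case True
  have right_in: "right p \<in> boxes Y" if "snd p < c" "fst p \<in> {r - 1, r}" for p
    using that low_box rows_shrink by (cases p) (auto simp: right_def in_boxes)
  have "fst x \<notin> {r - 1, r} \<or> fst y \<notin> {r - 1, r}"
    using right_in[of x] right_in[of y] True col no_right by auto
  then show ?thesis
    using True col row_pos by (auto simp: segment_swap_def)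
qed

lemma box_inversion_swap:
  assumes "x \<in> others" "y \<in> others"
  shows "box_inversion Y (\<tau> \<circ> \<sigma>) x y \<longleftrightarrow> box_inversion Y \<tau> (\<sigma> x) (\<sigma> y)"
proof -
  have right_eq: "\<sigma> (right x) = right (\<sigma> x)" "\<sigma> (right y) = right (\<sigma> y)"
    using assms swap_right by auto
  have right_box: "right (\<sigma> x) \<in> boxes Y \<longleftrightarrow> right x \<in> boxes Y"
    "right (\<sigma> y) \<in> boxes Y \<longleftrightarrow> right y \<in> boxes Y"
    using swap_boxes right_eq by metis+
  show ?thesis
    unfolding box_inversion_def inversion_order_def o_def right_eq right_box swap_column swap_boxes
    using swap_row_order[OF assms] by auto
qed

lemma others_term:
  "(\<Sum>x\<in>others. \<Sum>y\<in>others. of_bool (box_inversion Y (\<tau> \<circ> \<sigma>) x y))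
   = (\<Sum>x\<in>others. \<Sum>y\<in>others. (of_bool (box_inversion Y \<tau> x y) :: nat))"
proof -
  have "(\<Sum>x\<in>others. \<Sum>y\<in>others. of_bool (box_inversion Y (\<tau> \<circ> \<sigma>) x y))
      = (\<Sum>x\<in>others. \<Sum>y\<in>others. (of_bool (box_inversion Y \<tau> (\<sigma> x) (\<sigma> y)) :: nat))"
    by (simp add: box_inversion_swap)
  also have "\<dots> = (\<Sum>x\<in>others. \<Sum>y\<in>others. of_bool (box_inversion Y \<tau> (\<sigma> x) y))"
    by (rule sum.cong[OF refl], rule sum.reindex_bij_betw[OF swap_others])
  also have "\<dots> = (\<Sum>x\<in>others. \<Sum>y\<in>others. of_bool (box_inversion Y \<tau> x y))"
    by (rule sum.reindex_bij_betw[OF swap_others,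
          where g = "\<lambda>x. \<Sum>y\<in>others. of_bool (box_inversion Y \<tau> x y)"])
  finally show ?thesis .
qed

text \<open>(b) A third box \<open>x\<close> of column \<open>c\<close>, with value \<open>k\<close>: by \<open>box_pair_count\<close> the swap only
  exchanges which of \<open>i, j\<close> is compared with \<open>k\<close> against the orders of \<open>x\<close> with \<open>up\<close> and
  \<open>low\<close>.  This is harmless if \<open>k\<close> is on the same side of \<open>i\<close> and \<open>j\<close>, and otherwise
  condition (3) of \<open>D_i\<close> says exactly that the two orders agree.\<close>

lemma third_box_term:
  assumes x: "x \<in> others"
    and between: "snd x = c \<Longrightarrow> min (\<tau> low) (\<tau> up) < \<tau> x \<Longrightarrow> \<tau> x < max (\<tau> low) (\<tau> up) \<Longrightarrow>
      is_inversion Y \<tau> (min (\<tau> low) (\<tau> up)) (\<tau> x) \<noteq> is_inversion Y \<tau> (\<tau> x) (max (\<tau> low) (\<tau> up))"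
  shows "(of_bool (box_inversion Y (\<tau> \<circ> \<sigma>) x up) + of_bool (box_inversion Y (\<tau> \<circ> \<sigma>) up x))
       + (of_bool (box_inversion Y (\<tau> \<circ> \<sigma>) x low) + of_bool (box_inversion Y (\<tau> \<circ> \<sigma>) low x))
       = (of_bool (box_inversion Y \<tau> x up) + of_bool (box_inversion Y \<tau> up x))
       + (of_bool (box_inversion Y \<tau> x low) + (of_bool (box_inversion Y \<tau> low x) :: nat))"
proof (cases "snd x = c")
  case False
  then show ?thesis by (auto dest: box_inversion_same_column)
next
  case True
  have xB: "x \<in> boxes Y" and rows: "fst x \<noteq> fst up" "fst x \<noteq> fst low"
    using x True by (cases x; auto)+
  have col: "snd x = snd up" "snd x = snd low" and in_col: "snd up = c" "snd low = c"
    using True by simp_all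
  have fixed: "(\<tau> \<circ> \<sigma>) x = \<tau> x"
    using rows by (simp add: segment_swap_def)
  have distinct: "\<tau> x \<noteq> \<tau> up" "\<tau> x \<noteq> \<tau> low"
    using inj xB up_box low_box rows unfolding inj_on_def by metis+
  have orders_agree: "inversion_order Y \<tau> x up \<longleftrightarrow> inversion_order Y \<tau> x low"
    if sides: "\<not> (\<tau> x < \<tau> up \<longleftrightarrow> \<tau> x < \<tau> low)"
  proof -
    have "min (\<tau> low) (\<tau> up) < \<tau> x" "\<tau> x < max (\<tau> low) (\<tau> up)"
      using sides distinct by auto
    then have differ: "is_inversion Y \<tau> (min (\<tau> low) (\<tau> up)) (\<tau> x)
        \<noteq> is_inversion Y \<tau> (\<tau> x) (max (\<tau> low) (\<tau> up))"
      using between True by blast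
    consider "\<tau> low < \<tau> x" "\<tau> x < \<tau> up" | "\<tau> up < \<tau> x" "\<tau> x < \<tau> low"
      using sides distinct by linarith
    then show ?thesis
    proof cases
      case 1
      then have "is_inversion Y \<tau> (\<tau> low) (\<tau> x) \<noteq> is_inversion Y \<tau> (\<tau> x) (\<tau> up)"
        using differ by (simp add: min_def max_def)
      then show ?thesis
        unfolding is_inversion_at_boxes[OF inj low_box xB] is_inversion_at_boxes[OF inj xB up_box]
          box_inversion_def inversion_order_antisym[OF inj rows(2)]
        using 1 xB up_box low_box col by auto
    next
      case 2
      then have "is_inversion Y \<tau> (\<tau> up) (\<tau> x) \<noteq> is_inversion Y \<tau> (\<tau> x) (\<tau> low)"
        using differ by (simp add: min_def max_def)
      then show ?thesis
        unfolding is_inversion_at_boxes[OF inj up_box xB] is_inversion_at_boxes[OF inj xB low_box]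
          box_inversion_def inversion_order_antisym[OF inj rows(1)]
        using 2 xB up_box low_box col by auto
    qed
  qed
  show ?thesis
    unfolding box_pair_count[OF inj_swapped xB up_box col(1) rows(1)]
      box_pair_count[OF inj_swapped xB low_box col(2) rows(2)]
      box_pair_count[OF inj xB up_box col(1) rows(1)] box_pair_count[OF inj xB low_box col(2) rows(2)]
      column_order_fixed[OF True in_col(1)] column_order_fixed[OF True in_col(2)] fixed swapped_values
    using orders_agree by auto
qed

lemma pair_term_before:
  "of_bool (box_inversion Y \<tau> up low) + of_bool (box_inversion Y \<tau> low up)
   = (of_bool (is_inversion Y \<tau> (min (\<tau> low) (\<tau> up)) (max (\<tau> low) (\<tau> up))) :: nat)"
  using is_inversion_at_boxes[OF inj low_box up_box] is_inversion_at_boxes[OF inj up_box low_box]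
    inj up_box low_box up_ne_low
  by (cases "\<tau> low < \<tau> up") (auto simp: box_inversion_def inj_on_def min_def max_def)

lemma pair_term_flip:
  "of_bool (box_inversion Y \<tau> up low) + of_bool (box_inversion Y \<tau> low up)
   + (of_bool (box_inversion Y (\<tau> \<circ> \<sigma>) up low) + of_bool (box_inversion Y (\<tau> \<circ> \<sigma>) low up)) = (1::nat)"
proof -
  have col: "snd up = snd low" and in_col: "snd up = c" "snd low = c"
    and rows: "fst up \<noteq> fst low" using row_pos by simp_all
  have "\<tau> up \<noteq> \<tau> low" using inj up_box low_box up_ne_low by (auto simp: inj_on_def)
  then show ?thesis
    unfolding box_pair_count[OF inj up_box low_box col rows]
      box_pair_count[OF inj_swapped up_box low_box col rows] column_order_fixed[OF in_col]
      swapped_values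
    by auto
qed

lemma n_inv_swap:
  assumes between: "\<And>x. x \<in> boxes Y \<Longrightarrow> snd x = c \<Longrightarrow>
      min (\<tau> low) (\<tau> up) < \<tau> x \<Longrightarrow> \<tau> x < max (\<tau> low) (\<tau> up) \<Longrightarrow>
      is_inversion Y \<tau> (min (\<tau> low) (\<tau> up)) (\<tau> x) \<noteq> is_inversion Y \<tau> (\<tau> x) (max (\<tau> low) (\<tau> up))"
  shows "int (n_inv Y (\<tau> \<circ> \<sigma>)) =
           (if is_inversion Y \<tau> (min (\<tau> low) (\<tau> up)) (max (\<tau> low) (\<tau> up))
            then int (n_inv Y \<tau>) - 1 else int (n_inv Y \<tau>) + 1)"
proof -
  let ?others = "\<lambda>t. \<Sum>x\<in>others. \<Sum>y\<in>others. (of_bool (box_inversion Y t x y) :: nat)"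
  let ?mixed = "\<lambda>t. \<Sum>x\<in>others.
      (of_bool (box_inversion Y t x up) + of_bool (box_inversion Y t up x))
    + (of_bool (box_inversion Y t x low) + (of_bool (box_inversion Y t low x) :: nat))"
  let ?pair = "\<lambda>t. of_bool (box_inversion Y t up low) + (of_bool (box_inversion Y t low up) :: nat)"
  have split: "n_inv Y t = ?others t + ?mixed t + ?pair t" if "inj_on t (boxes Y)" for t
    unfolding n_inv_double_sum[OF that] double_sum_split_two[OF finite_boxes up_box low_box up_ne_low]
    by (simp add: box_inversion_irrefl)
  have mixed: "?mixed (\<tau> \<circ> \<sigma>) = ?mixed \<tau>"
    using third_box_term between by (intro sum.cong) auto
  have count: "n_inv Y (\<tau> \<circ> \<sigma>) + ?pair \<tau> = n_inv Y \<tau> + ?pair (\<tau> \<circ> \<sigma>)"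
    unfolding split[OF inj_swapped] split[OF inj] others_term mixed by (simp only: ac_simps)
  show ?thesis
    using count pair_term_flip pair_term_before
    by (cases "is_inversion Y \<tau> (min (\<tau> low) (\<tau> up)) (max (\<tau> low) (\<tau> up))") simp_all
qed

end

text \<open>Lemma 2.1: condition (3) of \<open>D_i\<close> is the hypothesis of \<open>n_inv_swap\<close>, and \<open>delta\<close> is the
  segment swap at the box of \<open>i\<close>.\<close>

theorem lemma2p1:
  fixes Y :: "nat list" and \<tau> :: "nat \<times> nat \<Rightarrow> nat" and i r c :: nat
  assumes "young_diagram Y"
    and "in_D Y i \<tau>"
    and "(r, c) \<in> boxes Y" and "\<tau> (r, c) = i"
  shows "int (n_inv Y (delta Y i \<tau>)) =
           (if is_inversion Y \<tau> (min i (\<tau> (r - 1, c))) (max i (\<tau> (r - 1, c)))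
            then int (n_inv Y \<tau>) - 1 else int (n_inv Y \<tau>) + 1)"
proof -
  have inj: "inj_on \<tau> (boxes Y)"
    using assms(2) by (simp add: in_D_def row_standard_def bij_betw_def)
  obtain r' c' where box': "(r', c') \<in> boxes Y" "\<tau> (r', c') = i" "0 < r'"
    and cond3: "\<forall>\<rho>. (\<rho>, c') \<in> boxes Y \<longrightarrow>
      (let k = \<tau> (\<rho>, c') in min i (\<tau> (r' - 1, c')) < k \<and> k < max i (\<tau> (r' - 1, c')) \<longrightarrow>
        is_inversion Y \<tau> (min i (\<tau> (r' - 1, c'))) k \<noteq> is_inversion Y \<tau> k (max i (\<tau> (r' - 1, c'))))"
    using assms(2) unfolding in_D_def Let_def by blast
  have "(r', c') = (r, c)"
    using inj box' assms(3,4) by (auto simp: inj_on_def)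
  with box' cond3 have "0 < r" and between: "\<And>x. x \<in> boxes Y \<Longrightarrow> snd x = c \<Longrightarrow>
      min i (\<tau> (r - 1, c)) < \<tau> x \<Longrightarrow> \<tau> x < max i (\<tau> (r - 1, c)) \<Longrightarrow>
      is_inversion Y \<tau> (min i (\<tau> (r - 1, c))) (\<tau> x) \<noteq> is_inversion Y \<tau> (\<tau> x) (max i (\<tau> (r - 1, c)))"
    by (auto simp: Let_def)
  interpret segment_swap_setting Y \<tau> r c
    using assms(1,3) inj \<open>0 < r\<close> by unfold_locales
  show ?thesis
    using n_inv_swap between delta_eq_segment_swap[OF inj assms(3,4)] assms(4) by simp
qed

end
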